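(* Let $m,v,x,y$ be nonzero real numbers, let $w\geq 0$ and let $u\in\mathbb{R}$. Let $\mathfrak{n}$ be the five-dimensional real Lie algebra with basis $\{E_1,\dots,E_5\}$ whose only non-vanishing brackets (up to antisymmetry) are $$[E_1,E_2]=mE_3+uE_5,\qquad [E_1,E_3]=vE_4+wE_5,\qquad [E_1,E_4]=xE_5,\qquad [E_2,E_3]=yE_5.$$ Equip the corresponding simply connected nilpotent Lie group with the left-invariant Riemannian metric for which $\{E_1,\dots,E_5\}$ is orthonormal. Then this metric is an algebraic Ricci soliton if and only if $$u=w=0,\qquad m^2=v^2=\tfrac32x^2,\qquad y^2=x^2.$$ In that case $$c=-\tfrac{11}4x^2,\qquad D=\mathrm{diag}\big(\tfrac34x^2,\tfrac32x^2,\tfrac94x^2,3x^2,\tfrac{15}4x^2\big),$$ where $D$ is written as a matrix with respect to the basis $\{E_1,\dots,E_5\}$.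
   Context: Let $G$ be a Lie group with Lie algebra $\mathfrak{g}$ and let $g$ be a left-invariant Riemannian metric on $G$. Let $\mathrm{Ric}$ denote the $(1,1)$ Ricci tensor of $g$, viewed as a linear endomorphism of $\mathfrak{g}$. The metric $g$ is an algebraic Ricci soliton if there are a real number $c$ and a derivation $D$ of $\mathfrak{g}$ such that $\mathrm{Ric}=c\,\mathrm{Id}+D$. The notation $\mathrm{diag}(a_1,\dots,a_5)$ denotes the diagonal matrix with these entries. *)

theory Defs
  imports "HOL-Analysis.Analysis"
begin

text \<open>A finite-dimensional real Lie algebra is identified with real^'n, the given
basis E_1..E_n being the standard basis (axis i 1). The left-invariant metric in
which this basis is orthonormal is then the standard inner product. All geometric quantities below are those of left-invariant
vector fields (the Lie algebra).\<close>

definition E :: "'n::finite \<Rightarrow> real^'n" where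
  "E i = axis i 1"

text \<open>Metric adjoint of ad_X: inner (ad_adj B X Y) Z = inner Y (B X Z).\<close>
definition ad_adj :: "(real^'n \<Rightarrow> real^'n \<Rightarrow> real^'n) \<Rightarrow> real^'n \<Rightarrow> real^'n \<Rightarrow> real^'n::finite" where
  "ad_adj B X Y = (\<chi> i. inner Y (B X (E i)))"

text \<open>Levi-Civita connection on left-invariant fields (Koszul formula).\<close>
definition LC :: "(real^'n \<Rightarrow> real^'n \<Rightarrow> real^'n) \<Rightarrow> real^'n \<Rightarrow> real^'n \<Rightarrow> real^'n::finite" where
  "LC B X Y = (1/2) *\<^sub>R (B X Y - ad_adj B X Y - ad_adj B Y X)"

definition curv :: "(real^'n \<Rightarrow> real^'n \<Rightarrow> real^'n) \<Rightarrow> real^'n \<Rightarrow> real^'n \<Rightarrow> real^'n \<Rightarrow> real^'n::finite" where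
  "curv B X Y Z = LC B X (LC B Y Z) - LC B Y (LC B X Z) - LC B (B X Y) Z"

definition ric :: "(real^'n \<Rightarrow> real^'n \<Rightarrow> real^'n) \<Rightarrow> real^'n \<Rightarrow> real^'n \<Rightarrow> real" where
  "ric B X Y = (\<Sum>i\<in>UNIV. inner (curv B (E i) X Y) (E (i::'n::finite)))"

definition Ric :: "(real^'n \<Rightarrow> real^'n \<Rightarrow> real^'n) \<Rightarrow> real^'n \<Rightarrow> real^'n::finite" where
  "Ric B X = (\<chi> j. ric B X (E j))"

definition is_derivation :: "(real^'n \<Rightarrow> real^'n \<Rightarrow> real^'n) \<Rightarrow> (real^'n \<Rightarrow> real^'n::finite) \<Rightarrow> bool" where
  "is_derivation B D \<longleftrightarrow> linear D \<and> (\<forall>X Y. D (B X Y) = B (D X) Y + B X (D Y))"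

definition algebraic_ricci_soliton ::
  "(real^'n \<Rightarrow> real^'n \<Rightarrow> real^'n) \<Rightarrow> real \<Rightarrow> (real^'n \<Rightarrow> real^'n::finite) \<Rightarrow> bool" where
  "algebraic_ricci_soliton B c D \<longleftrightarrow> is_derivation B D \<and> (\<forall>X. Ric B X = c *\<^sub>R X + D X)"

text \<open>The five-dimensional algebra: indices 1,2,3,4,5 of type 5 (note 5 = 0 in type 5,
still distinct from 1..4). Bilinear extension of
[E1,E2]=mE3+uE5, [E1,E3]=vE4+wE5, [E1,E4]=xE5, [E2,E3]=yE5.\<close>
definition brk5 :: "real \<Rightarrow> real \<Rightarrow> real \<Rightarrow> real \<Rightarrow> real \<Rightarrow> real \<Rightarrow> real^5 \<Rightarrow> real^5 \<Rightarrow> real^5" where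
  "brk5 m u v w x y X Y = (\<chi> k.
      if k = 3 then m * (X$1 * Y$2 - X$2 * Y$1)
      else if k = 4 then v * (X$1 * Y$3 - X$3 * Y$1)
      else if k = 5 then u * (X$1 * Y$2 - X$2 * Y$1) + w * (X$1 * Y$3 - X$3 * Y$1)
                       + x * (X$1 * Y$4 - X$4 * Y$1) + y * (X$2 * Y$3 - X$3 * Y$2)
      else 0)"

definition diag5 :: "real \<Rightarrow> real \<Rightarrow> real \<Rightarrow> real \<Rightarrow> real \<Rightarrow> real^5 \<Rightarrow> real^5" where
  "diag5 a1 a2 a3 a4 a5 X = (\<chi> k.
      (if k = 1 then a1 else if k = 2 then a2 else if k = 3 then a3 else if k = 4 then a4 else a5) * X$k)"

end

theory Submission
  imports Defs
begin

text \<open>Since the basis is orthonormal, a soliton forces D = Ric - c Id, so the question is when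
Ric - c Id is a derivation. Testing the derivation identity on [E1,E4] = x E5 against the
off-diagonal Ricci entries m u / 2 and v w / 2 forces u = w = 0. Then Ric is diagonal, and a
diagonal map diag(d1,...,d5) is a derivation exactly when d3 = d1 + d2, d4 = d1 + d3,
d5 = d1 + d4 = d2 + d3. For d_i = r_i - c with the Ricci eigenvalues r_i these are four
linear equations in m^2, v^2, x^2, y^2, c with the unique solution stated in the theorem.\<close>

lemma exhaust_5: "i = 1 \<or> i = 2 \<or> i = 3 \<or> i = 4 \<or> i = (5::5)"
proof (induct i)
  case (of_int z)
  then have "z = 0 \<or> z = 1 \<or> z = 2 \<or> z = 3 \<or> z = 4" by fastforce
  then show ?case by auto
qed

lemma UNIV_5: "UNIV = {1, 2, 3, 4, 5::5}"
  using exhaust_5 by auto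

lemma forall_5: "(\<forall>i::5. P i) \<longleftrightarrow> P 1 \<and> P 2 \<and> P 3 \<and> P 4 \<and> P 5"
  by (metis exhaust_5)

lemma sum_5: "sum f (UNIV::5 set) = f 1 + f 2 + f 3 + f 4 + f 5"
  unfolding UNIV_5 by (simp add: ac_simps)

lemma inner_5: "inner (X::real^5) Y = X$1 * Y$1 + X$2 * Y$2 + X$3 * Y$3 + X$4 * Y$4 + X$5 * Y$5"
  by (simp add: inner_vec_def sum_5)

lemma E_nth: "E i $ k = (if k = i then 1 else 0)"
  by (simp add: E_def axis_def)

lemma brk5_nth: "brk5 m u v w x y X Y $ k =
   (if k = 3 then m * (X$1 * Y$2 - X$2 * Y$1)
    else if k = 4 then v * (X$1 * Y$3 - X$3 * Y$1)
    else if k = 5 then u * (X$1 * Y$2 - X$2 * Y$1) + w * (X$1 * Y$3 - X$3 * Y$1)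
                     + x * (X$1 * Y$4 - X$4 * Y$1) + y * (X$2 * Y$3 - X$3 * Y$2)
    else 0)"
  by (simp add: brk5_def)

lemma diag5_nth: "diag5 a1 a2 a3 a4 a5 X $ k =
   (if k = 1 then a1 else if k = 2 then a2 else if k = 3 then a3 else if k = 4 then a4 else a5) * X$k"
  by (simp add: diag5_def)

lemma diag5_minus_scaleR:
  "(\<lambda>X. diag5 a1 a2 a3 a4 a5 X - c *\<^sub>R X) = diag5 (a1 - c) (a2 - c) (a3 - c) (a4 - c) (a5 - c)"
  by (auto simp: vec_eq_iff diag5_nth algebra_simps)

lemma linear_diag5: "linear (diag5 a1 a2 a3 a4 a5)"
  by (rule linearI) (simp_all add: vec_eq_iff diag5_nth algebra_simps)

lemma algebraic_ricci_soliton_iff: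
  "algebraic_ricci_soliton B c D \<longleftrightarrow> D = (\<lambda>X. Ric B X - c *\<^sub>R X) \<and> is_derivation B D"
  unfolding algebraic_ricci_soliton_def by (auto simp: algebra_simps)

lemma is_derivation_diag5_brk5_iff:
  "is_derivation (brk5 m u v w x y) (diag5 d1 d2 d3 d4 d5) \<longleftrightarrow>
     m * (d3 - d1 - d2) = 0 \<and> u * (d5 - d1 - d2) = 0 \<and> v * (d4 - d1 - d3) = 0 \<and>
     w * (d5 - d1 - d3) = 0 \<and> x * (d5 - d1 - d4) = 0 \<and> y * (d5 - d2 - d3) = 0"
  (is "?der \<longleftrightarrow> ?eqs")
proof
  assume ?der
  then have "diag5 d1 d2 d3 d4 d5 (brk5 m u v w x y (E i) (E j)) $ k =
      (brk5 m u v w x y (diag5 d1 d2 d3 d4 d5 (E i)) (E j)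
       + brk5 m u v w x y (E i) (diag5 d1 d2 d3 d4 d5 (E j))) $ k" for i j k
    by (simp add: is_derivation_def)
  from this[of 1 2 3] this[of 1 2 5] this[of 1 3 4] this[of 1 3 5] this[of 1 4 5] this[of 2 3 5]
  show ?eqs by (simp_all add: diag5_nth brk5_nth E_nth algebra_simps)
next
  assume ?eqs
  then show ?der
    by (simp add: is_derivation_def linear_diag5 vec_eq_iff forall_5 diag5_nth brk5_nth
        algebra_simps) algebra
qed

lemma ric_5: "ric (B::real^5 \<Rightarrow> real^5 \<Rightarrow> real^5) X Y =
    curv B (E 1) X Y $ 1 + curv B (E 2) X Y $ 2 + curv B (E 3) X Y $ 3
  + curv B (E 4) X Y $ 4 + curv B (E 5) X Y $ 5"
  by (simp add: ric_def sum_5 inner_5 E_nth)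

lemma LC_nth: "LC B X Y $ k = (B X Y $ k - inner Y (B X (E k)) - inner X (B Y (E k))) / 2"
  by (simp add: LC_def ad_adj_def)

lemma curv_nth: "curv B X Y Z $ k = LC B X (LC B Y Z) $ k - LC B Y (LC B X Z) $ k - LC B (B X Y) Z $ k"
  by (simp add: curv_def)

lemma LC_brk5_1: "LC (brk5 m u v w x y) X Y $ 1 = (m * (X$2 * Y$3 + X$3 * Y$2) + v * (X$3 * Y$4 + X$4 * Y$3)
    + u * (X$2 * Y$5 + X$5 * Y$2) + w * (X$3 * Y$5 + X$5 * Y$3) + x * (X$4 * Y$5 + X$5 * Y$4)) / 2"
  by (simp add: LC_nth brk5_nth inner_5 E_nth; simp add: field_simps)

lemma LC_brk5_2: "LC (brk5 m u v w x y) X Y $ 2 =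
    (- m * (X$1 * Y$3 + X$3 * Y$1) - u * (X$1 * Y$5 + X$5 * Y$1) + y * (X$3 * Y$5 + X$5 * Y$3)) / 2"
  by (simp add: LC_nth brk5_nth inner_5 E_nth; simp add: field_simps)

lemma LC_brk5_3: "LC (brk5 m u v w x y) X Y $ 3 = (m * (X$1 * Y$2 - X$2 * Y$1) - v * (X$1 * Y$4 + X$4 * Y$1)
    - w * (X$1 * Y$5 + X$5 * Y$1) - y * (X$2 * Y$5 + X$5 * Y$2)) / 2"
  by (simp add: LC_nth brk5_nth inner_5 E_nth; simp add: field_simps)

lemma LC_brk5_4: "LC (brk5 m u v w x y) X Y $ 4 = (v * (X$1 * Y$3 - X$3 * Y$1) - x * (X$1 * Y$5 + X$5 * Y$1)) / 2"
  by (simp add: LC_nth brk5_nth inner_5 E_nth; simp add: field_simps)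

lemma LC_brk5_5: "LC (brk5 m u v w x y) X Y $ 5 = (u * (X$1 * Y$2 - X$2 * Y$1) + w * (X$1 * Y$3 - X$3 * Y$1)
    + x * (X$1 * Y$4 - X$4 * Y$1) + y * (X$2 * Y$3 - X$3 * Y$2)) / 2"
  by (simp add: LC_nth brk5_nth inner_5 E_nth; simp add: field_simps)

lemmas Ric_brk5_simps = Ric_def ric_5 curv_nth LC_brk5_1 LC_brk5_2 LC_brk5_3 LC_brk5_4 LC_brk5_5
  brk5_nth E_nth

lemma Ric_brk5_1: "Ric (brk5 m u v w x y) X $ 1 =
    - (m^2 + u^2 + v^2 + w^2 + x^2) / 2 * X$1 - w * y / 2 * X$2 + u * y / 2 * X$3"
  by (simp add: Ric_brk5_simps; simp add: field_simps power2_eq_square)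

lemma Ric_brk5_2: "Ric (brk5 m u v w x y) X $ 2 =
    - w * y / 2 * X$1 - (m^2 + u^2 + y^2) / 2 * X$2 - u * w / 2 * X$3 - u * x / 2 * X$4"
  by (simp add: Ric_brk5_simps; simp add: field_simps power2_eq_square)

lemma Ric_brk5_3: "Ric (brk5 m u v w x y) X $ 3 =
    u * y / 2 * X$1 - u * w / 2 * X$2 + (m^2 - v^2 - w^2 - y^2) / 2 * X$3 - w * x / 2 * X$4
  + m * u / 2 * X$5"
  by (simp add: Ric_brk5_simps; simp add: field_simps power2_eq_square)

lemma Ric_brk5_4: "Ric (brk5 m u v w x y) X $ 4 =
    - u * x / 2 * X$2 - w * x / 2 * X$3 + (v^2 - x^2) / 2 * X$4 + v * w / 2 * X$5"
  by (simp add: Ric_brk5_simps; simp add: field_simps power2_eq_square)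

lemma Ric_brk5_5: "Ric (brk5 m u v w x y) X $ 5 =
    m * u / 2 * X$3 + v * w / 2 * X$4 + (u^2 + w^2 + x^2 + y^2) / 2 * X$5"
  by (simp add: Ric_brk5_simps; simp add: field_simps power2_eq_square)

lemma Ric_brk5_diagonal: "Ric (brk5 m 0 v 0 x y) =
    diag5 (- (m^2 + v^2 + x^2) / 2) (- (m^2 + y^2) / 2) ((m^2 - v^2 - y^2) / 2) ((v^2 - x^2) / 2)
      ((x^2 + y^2) / 2)"
  by (rule ext) (simp add: vec_eq_iff forall_5 diag5_nth Ric_brk5_1 Ric_brk5_2 Ric_brk5_3 Ric_brk5_4
      Ric_brk5_5 algebra_simps)

lemma algebraic_ricci_soliton_brk5_u_w_zero:
  assumes "m \<noteq> 0" "v \<noteq> 0" "x \<noteq> 0"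
    and "algebraic_ricci_soliton (brk5 m u v w x y) c D"
  shows "u = 0 \<and> w = 0"
proof -
  let ?B = "brk5 m u v w x y" and ?D = "\<lambda>X. Ric (brk5 m u v w x y) X - c *\<^sub>R X"
  have "is_derivation ?B ?D"
    using assms(4) unfolding algebraic_ricci_soliton_iff by (elim conjE) simp
  then have "?D (?B (E 1) (E 4)) $ k = (?B (?D (E 1)) (E 4) + ?B (E 1) (?D (E 4))) $ k" for k
    by (simp only: is_derivation_def)
  from this[of 3] this[of 4] have "m * u * x = 0" "v * w * x = 0"
    by (simp_all add: brk5_nth E_nth Ric_brk5_2 Ric_brk5_3 Ric_brk5_4 algebra_simps)
  with assms(1-3) show ?thesis by simp
qed

lemma algebraic_ricci_soliton_brk5_iff:
  assumes "m \<noteq> 0" "v \<noteq> 0" "x \<noteq> 0" "y \<noteq> 0"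
  shows "algebraic_ricci_soliton (brk5 m 0 v 0 x y) c D \<longleftrightarrow>
    m^2 = 3/2 * x^2 \<and> v^2 = 3/2 * x^2 \<and> y^2 = x^2 \<and> c = -(11/4) * x^2 \<and>
    D = diag5 (3/4 * x^2) (3/2 * x^2) (9/4 * x^2) (3 * x^2) (15/4 * x^2)"
proof -
  let ?D = "diag5 (- (m^2 + v^2 + x^2) / 2 - c) (- (m^2 + y^2) / 2 - c) ((m^2 - v^2 - y^2) / 2 - c)
      ((v^2 - x^2) / 2 - c) ((x^2 + y^2) / 2 - c)"
  have "is_derivation (brk5 m 0 v 0 x y) ?D \<longleftrightarrow>
      3 * m^2 + x^2 + 2 * c = 0 \<and> 3 * v^2 + y^2 + 2 * c = 0 \<and>
      m^2 + 3 * x^2 + y^2 + 2 * c = 0 \<and> v^2 + x^2 + 3 * y^2 + 2 * c = 0"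
    unfolding is_derivation_diag5_brk5_iff using assms by simp argo
  then have "algebraic_ricci_soliton (brk5 m 0 v 0 x y) c D \<longleftrightarrow>
      D = ?D \<and> 3 * m^2 + x^2 + 2 * c = 0 \<and> 3 * v^2 + y^2 + 2 * c = 0 \<and>
      m^2 + 3 * x^2 + y^2 + 2 * c = 0 \<and> v^2 + x^2 + 3 * y^2 + 2 * c = 0"
    unfolding algebraic_ricci_soliton_iff Ric_brk5_diagonal diag5_minus_scaleR by auto
  moreover have "3 * m^2 + x^2 + 2 * c = 0 \<and> 3 * v^2 + y^2 + 2 * c = 0 \<and>
      m^2 + 3 * x^2 + y^2 + 2 * c = 0 \<and> v^2 + x^2 + 3 * y^2 + 2 * c = 0 \<longleftrightarrow>
      m^2 = 3/2 * x^2 \<and> v^2 = 3/2 * x^2 \<and> y^2 = x^2 \<and> c = -(11/4) * x^2"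
    by (rule iffI; (elim conjE, intro conjI); linarith)
  moreover have "?D = diag5 (3/4 * x^2) (3/2 * x^2) (9/4 * x^2) (3 * x^2) (15/4 * x^2)"
    if "m^2 = 3/2 * x^2" "v^2 = 3/2 * x^2" "y^2 = x^2" "c = -(11/4) * x^2"
    unfolding that by (simp add: field_simps)
  ultimately show ?thesis by metis
qed

theorem mainTheorem6:
  fixes m u v w x y :: real
  assumes "m \<noteq> 0" "v \<noteq> 0" "x \<noteq> 0" "y \<noteq> 0" "w \<ge> 0"
  shows "((\<exists>c D. algebraic_ricci_soliton (brk5 m u v w x y) c D) \<longleftrightarrow>
            (u = 0 \<and> w = 0 \<and> m^2 = 3/2 * x^2 \<and> v^2 = 3/2 * x^2 \<and> y^2 = x^2))
       \<and> (\<forall>c D. algebraic_ricci_soliton (brk5 m u v w x y) c D \<longrightarrow>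
            c = -(11/4) * x^2 \<and>
            D = diag5 (3/4 * x^2) (3/2 * x^2) (9/4 * x^2) (3 * x^2) (15/4 * x^2))"
  using algebraic_ricci_soliton_brk5_u_w_zero[OF assms(1-3)]
    algebraic_ricci_soliton_brk5_iff[OF assms(1-4)]
  by blast

end
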